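(* Let $T:I\to I$, $I=[0,1]$, be a non-singular map whose Perron–Frobenius operator $P$ satisfies: there exist $\alpha_0\in(0,1)$ and $B_0\ge 0$ such that $VPf\le \alpha_0 Vf+B_0\|f\|_1$ for all $f\in BV(I)$. Let $\eta$ be any finite partition of $I$ into intervals and $P_\eta=\Pi_\eta\circ P\circ\Pi_\eta$ its Ulam approximation. Then, with $\hat B=1+\frac{B_0}{1-\alpha_0}$ (independent of $\eta$), for all $n\in\mathbb N$ and all $f\in BV(I)$, $$\|P^nf\|_{BV}\le \alpha_0^n\|f\|_{BV}+\hat B\|f\|_1,\qquad \|P_\eta^nf\|_{BV}\le \alpha_0^n\|f\|_{BV}+\hat B\|f\|_1 .$$ If moreover $\alpha_0<1/3$, then for every open interval $H\subset I$, the Perron–Frobenius operator $P_H$ of the map with hole $T_H$ satisfies, for all $n\in\mathbb N$ and all $f\in BV(I)$, $$\|P_H^nf\|_{BV}\le \alpha^n\|f\|_{BV}+B\|f\|_1,$$ where $\alpha=3\alpha_0<1$ and $B=1+\frac{2\alpha_0+B_0}{1-\alpha}$, constants independent of $H$.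
   Context: $\lambda$ is Lebesgue measure on $I=[0,1]$, $L^1=L^1(I,\lambda)$. For $f\in L^1$, $Vf=\inf\{\mathrm{var}\,\bar f:\ \bar f=f \text{ a.e.}\}$, where $\mathrm{var}\,\bar f$ is the usual total variation of $\bar f$ on $[0,1]$; $BV(I)$ is the space of $f$ with $Vf<\infty$, normed by $\|f\|_{BV}=Vf+\|f\|_1$. $T$ non-singular means $\lambda(T^{-1}A)=0$ whenever $\lambda(A)=0$; its Perron–Frobenius operator $P:L^1\to L^1$ is defined by $\int_A Pf\,d\lambda=\int_{T^{-1}A}f\,d\lambda$ for all Borel $A$. For a finite partition $\eta$ of $I$ into intervals, $\Pi_\eta f(x)=\frac{1}{\lambda(J)}\int_J f\,d\lambda$ for $x\in J\in\eta$ (conditional expectation onto the $\sigma$-algebra generated by $\eta$). For an open interval $H\subset I$, let $X_0=I\setminus H$, $X_{n-1}=\bigcap_{i=0}^{n-1}T^{-i}X_0$, and $T_H=T|_{X_0}$; its Perron–Frobenius operator is $P_Hf=P(f\chi_{X_0})$, so that $P_H^nf=P^n(f\chi_{X_{n-1}})$. *)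

theory Defs
  imports "HOL-Analysis.Analysis"
begin

definition lam :: "real measure" where
  "lam = restrict_space lborel {0..1}"

definition var01 :: "(real \<Rightarrow> real) \<Rightarrow> ereal" where
  "var01 g = (SUP xs \<in> {xs. sorted xs \<and> set xs \<subseteq> {0..1}}.
      ereal (\<Sum>i < length xs - 1. \<bar>g (xs ! Suc i) - g (xs ! i)\<bar>))"

definition Var :: "(real \<Rightarrow> real) \<Rightarrow> ereal" where
  "Var f = (INF g \<in> {g. AE x in lam. g x = f x}. var01 g)"

definition norm1 :: "(real \<Rightarrow> real) \<Rightarrow> real" where
  "norm1 f = (\<integral>x. \<bar>f x\<bar> \<partial>lam)"

definition BV :: "(real \<Rightarrow> real) set" where
  "BV = {f. integrable lam f \<and> Var f < \<infinity>}"

definition normBV :: "(real \<Rightarrow> real) \<Rightarrow> ereal" where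
  "normBV f = Var f + ereal (norm1 f)"

definition nonsingular :: "(real \<Rightarrow> real) \<Rightarrow> bool" where
  "nonsingular T \<longleftrightarrow> (\<forall>A \<in> sets lam. emeasure lam A = 0 \<longrightarrow>
      emeasure lam (T -` A \<inter> space lam) = 0)"

definition is_PF_operator :: "(real \<Rightarrow> real) \<Rightarrow> ((real \<Rightarrow> real) \<Rightarrow> (real \<Rightarrow> real)) \<Rightarrow> bool" where
  "is_PF_operator T P \<longleftrightarrow> (\<forall>f. integrable lam f \<longrightarrow> integrable lam (P f) \<and>
      (\<forall>A \<in> sets lam. (LINT x:A|lam. P f x) = (LINT x:(T -` A \<inter> space lam)|lam. f x)))"

definition interval_partition :: "real set set \<Rightarrow> bool" where
  "interval_partition \<eta> \<longleftrightarrow> finite \<eta> \<and> \<Union>\<eta> = {0..1} \<and>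
      (\<forall>J\<in>\<eta>. J \<noteq> {} \<and> is_interval J) \<and>
      (\<forall>J\<in>\<eta>. \<forall>K\<in>\<eta>. J \<noteq> K \<longrightarrow> J \<inter> K = {})"

definition Pi_part :: "real set set \<Rightarrow> (real \<Rightarrow> real) \<Rightarrow> (real \<Rightarrow> real)" where
  "Pi_part \<eta> f x = (\<Sum>J\<in>\<eta>. if x \<in> J then (LINT y:J|lam. f y) / measure lam J else 0)"

definition ulam_op :: "real set set \<Rightarrow> ((real \<Rightarrow> real) \<Rightarrow> (real \<Rightarrow> real)) \<Rightarrow> (real \<Rightarrow> real) \<Rightarrow> (real \<Rightarrow> real)" where
  "ulam_op \<eta> P = Pi_part \<eta> \<circ> P \<circ> Pi_part \<eta>"

text \<open>Perron--Frobenius operator of the map with hole H: P_H f = P (f * chi_{X_0}), X_0 = I - H.\<close>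
definition hole_op :: "real set \<Rightarrow> ((real \<Rightarrow> real) \<Rightarrow> (real \<Rightarrow> real)) \<Rightarrow> (real \<Rightarrow> real) \<Rightarrow> (real \<Rightarrow> real)" where
  "hole_op H P f = P (\<lambda>x. f x * indicator ({0..1} - H) x)"

end

theory Submission
  imports Defs
begin

text \<open>Call an operator \<open>Q\<close> a Lasota--Yorke step with constants \<open>\<alpha>, C\<close> if it maps \<open>BV\<close> into
  itself, does not increase the \<open>L\<^sup>1\<close> norm and satisfies \<open>V(Qf) \<le> \<alpha> Vf + C\<parallel>f\<parallel>\<^sub>1\<close>.
  Such steps compose, \<open>R \<circ> Q\<close> having constants \<open>\<beta>\<alpha>, \<beta>C + D\<close>, and the \<open>n\<close>-th iterate of one has
  constants \<open>\<alpha>\<^sup>n\<close> and \<open>C(1 + \<alpha> + \<dots>) \<le> C/(1-\<alpha>)\<close>. The operator \<open>P\<close> is a step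
  with constants \<open>\<alpha>\<^sub>0, B\<^sub>0\<close>. The conditional expectation \<open>\<Pi>\<^sub>\<eta>\<close> is one with constants \<open>1, 0\<close>:
  a version of \<open>\<Pi>\<^sub>\<eta> f\<close> is a step function whose value on each cell lies between two values
  of any version of \<open>f\<close> there. Multiplication by the indicator of \<open>I - H\<close> is one with constants
  \<open>3, 2\<close>: it adds at most two jumps, each bounded by the sup norm, which is at most
  \<open>Vf + \<parallel>f\<parallel>\<^sub>1\<close>.\<close>

lemma space_lam [simp]: "space lam = {0..1}"
  by (simp add: lam_def space_restrict_space)

lemma sets_lam_iff: "A \<in> sets lam \<longleftrightarrow> A \<subseteq> {0..1} \<and> A \<in> sets borel"
  unfolding lam_def by (subst sets_restrict_space_iff) auto

lemma emeasure_lam_space: "emeasure lam (space lam) = 1"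
  unfolding lam_def by (subst emeasure_restrict_space) auto

interpretation lam: finite_measure lam
  by (rule finite_measureI) (simp only: emeasure_lam_space, simp)

lemma measure_lam_space: "measure lam {0..1} = 1"
  using emeasure_lam_space by (simp add: measure_def)

lemma integrable_indicator_mult [intro]:
  fixes f :: "'a \<Rightarrow> real"
  shows "A \<in> sets M \<Longrightarrow> integrable M f \<Longrightarrow> integrable M (\<lambda>x. indicator A x * f x)"
  using integrable_real_mult_indicator[of A M f] by (simp add: mult.commute)

lemma norm1_nonneg: "0 \<le> norm1 f"
  unfolding norm1_def by (rule integral_nonneg_AE) auto

subsection \<open>Variation along a finite sequence of points\<close>

definition variation_sum :: "(real \<Rightarrow> real) \<Rightarrow> real list \<Rightarrow> real" where
  "variation_sum g xs = (\<Sum>i < length xs - 1. \<bar>g (xs ! Suc i) - g (xs ! i)\<bar>)"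

lemma variation_sum_Nil [simp]: "variation_sum g [] = 0"
  and variation_sum_single [simp]: "variation_sum g [x] = 0"
  by (simp_all add: variation_sum_def)

lemma variation_sum_Cons_Cons [simp]:
  "variation_sum g (x # y # r) = \<bar>g y - g x\<bar> + variation_sum g (y # r)"
  unfolding variation_sum_def by (simp add: sum.lessThan_Suc_shift del: sum.lessThan_Suc)

lemma variation_sum_cong:
  "(\<And>x. x \<in> set xs \<Longrightarrow> g x = h x) \<Longrightarrow> variation_sum g xs = variation_sum h xs"
  unfolding variation_sum_def by (intro sum.cong refl) (simp add: nth_mem)

lemma variation_sum_append:
  "xs \<noteq> [] \<Longrightarrow> ys \<noteq> [] \<Longrightarrow>
   variation_sum g (xs @ ys) = variation_sum g xs + \<bar>g (hd ys) - g (last xs)\<bar> + variation_sum g ys"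
  by (induction xs rule: induct_list012) (auto simp: neq_Nil_conv)

lemma var01_eq_SUP_variation_sum:
  "var01 g = (SUP xs \<in> {xs. sorted xs \<and> set xs \<subseteq> {0..1}}. ereal (variation_sum g xs))"
  unfolding var01_def variation_sum_def ..

lemma variation_sum_le_var01:
  "sorted xs \<Longrightarrow> set xs \<subseteq> {0..1} \<Longrightarrow> ereal (variation_sum g xs) \<le> var01 g"
  unfolding var01_eq_SUP_variation_sum by (rule SUP_upper) auto

lemma var01_leI:
  "(\<And>xs. sorted xs \<Longrightarrow> set xs \<subseteq> {0..1} \<Longrightarrow> ereal (variation_sum g xs) \<le> c) \<Longrightarrow> var01 g \<le> c"
  unfolding var01_eq_SUP_variation_sum by (rule SUP_least) auto

lemma var01_nonneg: "0 \<le> var01 g"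
  using variation_sum_le_var01[of "[]" g] by (simp add: zero_ereal_def)

lemma Var_nonneg: "0 \<le> Var f"
  unfolding Var_def by (rule INF_greatest) (rule var01_nonneg)

lemma abs_diff_le_var01:
  assumes "x \<in> {0..1}" "y \<in> {0..1}"
  shows "ereal \<bar>g x - g y\<bar> \<le> var01 g"
proof -
  have "ereal (variation_sum g [min x y, max x y]) \<le> var01 g"
    by (rule variation_sum_le_var01) (use assms in auto)
  then show ?thesis by (cases "x \<le> y") (auto simp: max_def min_def abs_minus_commute)
qed

lemma abs_le_var01_plus_norm1:
  assumes ae: "AE y in lam. g y = f y" and int: "integrable lam f"
    and var: "var01 g \<le> ereal r" and x: "x \<in> {0..1}"
  shows "\<bar>g x\<bar> \<le> r + norm1 f"
proof -
  have "AE y in lam. \<bar>g x\<bar> \<le> r + \<bar>f y\<bar>"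
    using ae
  proof (rule AE_mp, intro AE_I2 impI)
    fix y assume y: "y \<in> space lam" and "g y = f y"
    have "ereal \<bar>g x - g y\<bar> \<le> ereal r"
      using order_trans[OF abs_diff_le_var01[of x y g] var] x y by auto
    then show "\<bar>g x\<bar> \<le> r + \<bar>f y\<bar>" using \<open>g y = f y\<close> by simp
  qed
  then have "integral\<^sup>L lam (\<lambda>y. \<bar>g x\<bar>) \<le> integral\<^sup>L lam (\<lambda>y. r + \<bar>f y\<bar>)"
    by (intro integral_mono_AE) (use int in auto)
  then show ?thesis
    using int by (simp add: norm1_def measure_lam_space)
qed

subsection \<open>The Perron--Frobenius operator contracts the \<open>L\<^sup>1\<close> norm\<close>

lemma PF_integrable:
  "is_PF_operator T P \<Longrightarrow> integrable lam f \<Longrightarrow> integrable lam (P f)"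
  unfolding is_PF_operator_def by blast

lemma norm1_PF_le:
  assumes meas: "T \<in> lam \<rightarrow>\<^sub>M lam" and PF: "is_PF_operator T P" and int: "integrable lam f"
  shows "norm1 (P f) \<le> norm1 f"
proof -
  have ip: "integrable lam (P f)" using PF int by (rule PF_integrable)
  have PF_set: "\<And>A. A \<in> sets lam \<Longrightarrow> (LINT x:A|lam. P f x) = (LINT x:(T -` A \<inter> space lam)|lam. f x)"
    using PF int unfolding is_PF_operator_def by auto
  define A where "A = {x \<in> space lam. 0 \<le> P f x}"
  define B where "B = space lam - A"
  have A: "A \<in> sets lam" unfolding A_def using ip by measurable
  have B: "B \<in> sets lam" unfolding B_def using sets.compl_sets[OF A] by simp
  define A' where "A' = T -` A \<inter> space lam"
  define B' where "B' = T -` B \<inter> space lam"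
  have A'B': "A' \<in> sets lam" "B' \<in> sets lam"
    unfolding A'_def B'_def using measurable_sets[OF meas A] measurable_sets[OF meas B] by auto
  have "norm1 (P f) = integral\<^sup>L lam (\<lambda>x. indicator A x * P f x - indicator B x * P f x)"
    unfolding norm1_def
    by (rule Bochner_Integration.integral_cong) (auto simp: A_def B_def indicator_def)
  also have "\<dots> = (LINT x:A|lam. P f x) - (LINT x:B|lam. P f x)"
    unfolding set_lebesgue_integral_def real_scaleR_def using A B ip
    by (intro Bochner_Integration.integral_diff) auto
  also have "\<dots> = (LINT x:A'|lam. f x) - (LINT x:B'|lam. f x)"
    using PF_set[OF A] PF_set[OF B] by (simp add: A'_def B'_def)
  also have "\<dots> = integral\<^sup>L lam (\<lambda>x. indicator A' x * f x - indicator B' x * f x)"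
    unfolding set_lebesgue_integral_def real_scaleR_def using A'B' int
    by (intro Bochner_Integration.integral_diff[symmetric]) auto
  also have "\<dots> \<le> norm1 f"
    unfolding norm1_def
  proof (rule integral_mono)
    \<comment> \<open>\<open>A'\<close> and \<open>B'\<close> are disjoint, being preimages of disjoint sets\<close>
    show "indicator A' x * f x - indicator B' x * f x \<le> \<bar>f x\<bar>" for x
      by (auto simp: A'_def B'_def B_def indicator_def)
  qed (use A'B' int in auto)
  finally show ?thesis .
qed

abbreviation rVar :: "(real \<Rightarrow> real) \<Rightarrow> real" where
  "rVar f \<equiv> real_of_ereal (Var f)"

lemma BV_Var_eq: "f \<in> BV \<Longrightarrow> Var f = ereal (rVar f)"
  using Var_nonneg[of f] unfolding BV_def by (cases "Var f") auto

lemma BV_normBV_eq: "f \<in> BV \<Longrightarrow> normBV f = ereal (rVar f + norm1 f)"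
  unfolding normBV_def by (subst BV_Var_eq) auto

lemma BV_rVar_le: "g \<in> BV \<Longrightarrow> Var g \<le> ereal r \<Longrightarrow> rVar g \<le> r"
  by (metis BV_Var_eq ereal_less_eq(3))

lemma BVI: "integrable lam g \<Longrightarrow> Var g \<le> ereal r \<Longrightarrow> g \<in> BV"
  unfolding BV_def by (auto intro: le_less_trans)

lemma ereal_le_epsilon:
  assumes "\<And>e. 0 < e \<Longrightarrow> x \<le> ereal (c + e)" "0 \<le> x"
  shows "x \<le> ereal c"
proof -
  obtain y where y: "x = ereal y" using assms(1)[of 1] assms(2) by (cases x) auto
  have "y \<le> c" by (rule field_le_epsilon) (use assms(1) y in auto)
  then show ?thesis using y by simp
qed

subsection \<open>Cutting out an interval\<close>

lemma sorted_dropWhile_le_gt: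
  "sorted xs \<Longrightarrow> x \<in> set (dropWhile (\<lambda>x. x \<le> a) xs) \<Longrightarrow> a < x"
  by (induction xs) (auto split: if_splits)

lemma sorted_dropWhile_less_ge:
  "sorted xs \<Longrightarrow> x \<in> set (dropWhile (\<lambda>x. x < b) xs) \<Longrightarrow> b \<le> x"
  by (induction xs) (auto split: if_splits)

lemma variation_sum_vanishing_middle:
  assumes M: "M \<noteq> []" "\<And>x. x \<in> set M \<Longrightarrow> h x = 0"
    and LR: "\<And>x. x \<in> set L \<union> set R \<Longrightarrow> h x = g x"
    and K: "\<And>x. x \<in> set L \<union> set R \<Longrightarrow> \<bar>g x\<bar> \<le> K" "0 \<le> K"
  shows "variation_sum h (L @ M @ R) \<le> variation_sum g L + variation_sum g R + 2 * K"
proof -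
  have vM: "variation_sum h M = 0"
    using variation_sum_cong[of M h "\<lambda>_. 0"] M(2) by (simp add: variation_sum_def)
  have vL: "variation_sum h L = variation_sum g L" and vR: "variation_sum h R = variation_sum g R"
    using LR by (auto intro: variation_sum_cong)
  have MR: "variation_sum h (M @ R) \<le> K + variation_sum g R"
  proof (cases "R = []")
    case R: False
    have "variation_sum h (M @ R) = \<bar>g (hd R)\<bar> + variation_sum g R"
      using variation_sum_append[OF M(1) R, of h] vM vR M(2)[OF last_in_set[OF M(1)]]
        LR[of "hd R"] R by simp
    then show ?thesis using K(1)[of "hd R"] R by simp
  qed (use vM K(2) in simp)
  have "variation_sum h (L @ M @ R) \<le> variation_sum g L + K + variation_sum h (M @ R)"
  proof (cases "L = []")
    case L: False
    have "variation_sum h (L @ (M @ R)) = variation_sum g L + \<bar>g (last L)\<bar> + variation_sum h (M @ R)"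
      using variation_sum_append[of L "M @ R" h] vL M(2)[OF hd_in_set[OF M(1)]]
        LR[of "last L"] L M(1) by simp
    then show ?thesis using K(1)[of "last L"] L by simp
  qed (use K(2) in simp)
  then show ?thesis using MR by simp
qed

text \<open>The points left and right of the hole form one sorted sequence, so together they cost
  at most \<open>r\<close>; the points inside it only add the two jumps to and from \<open>0\<close>.\<close>

lemma variation_sum_cut_interval:
  fixes g :: "real \<Rightarrow> real" and a b K r :: real
  defines "h \<equiv> \<lambda>x. g x * indicator ({0..1} - {a<..<b}) x"
  assumes xs: "sorted xs" "set xs \<subseteq> {0..1}"
    and K: "\<And>x. x \<in> {0..1} \<Longrightarrow> \<bar>g x\<bar> \<le> K"
    and r: "\<And>ys. sorted ys \<Longrightarrow> set ys \<subseteq> {0..1} \<Longrightarrow> variation_sum g ys \<le> r"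
  shows "variation_sum h xs \<le> r + 2 * K"
proof -
  define L where "L = takeWhile (\<lambda>x. x \<le> a) xs"
  define Rs where "Rs = dropWhile (\<lambda>x. x \<le> a) xs"
  define M where "M = takeWhile (\<lambda>x. x < b) Rs"
  define R where "R = dropWhile (\<lambda>x. x < b) Rs"
  have xs_split: "xs = L @ M @ R" unfolding L_def M_def R_def Rs_def by simp
  have sets: "set L \<subseteq> {0..1}" "set R \<subseteq> {0..1}"
    using xs(2) xs_split by (metis Un_subset_iff set_append)+
  have "sorted Rs" unfolding Rs_def using xs by (simp add: sorted_dropWhile)
  then have "b \<le> x" if "x \<in> set R" for x
    using that sorted_dropWhile_less_ge unfolding R_def by blast
  moreover have "x \<le> a" if "x \<in> set L" for x
    using that unfolding L_def by (auto dest: set_takeWhileD)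
  ultimately have hLR: "h x = g x" if "x \<in> set L \<union> set R" for x
    using that sets by (force simp: h_def indicator_def)
  have hM: "h x = 0" if "x \<in> set M" for x
    using that sorted_dropWhile_le_gt[OF xs(1)]
    by (auto dest: set_takeWhileD simp: M_def Rs_def h_def)
  have LR: "variation_sum g L + variation_sum g R \<le> r"
  proof -
    have "sorted (L @ R)" using xs(1) xs_split by (simp add: sorted_append)
    then have "variation_sum g (L @ R) \<le> r" using sets by (intro r) auto
    then show ?thesis
      by (cases "L = [] \<or> R = []") (auto simp: variation_sum_append[of L R g])
  qed
  have K0: "0 \<le> K" using K[of 0] by auto
  show ?thesis
  proof (cases "M = []")
    case True
    then have "variation_sum h xs = variation_sum g xs"
      using xs_split hLR by (intro variation_sum_cong) auto
    then show ?thesis using r[OF xs] K0 by simp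
  next
    case False
    have "variation_sum h (L @ M @ R) \<le> variation_sum g L + variation_sum g R + 2 * K"
      using sets by (intro variation_sum_vanishing_middle[OF False hM hLR K K0]) auto
    then show ?thesis using LR xs_split by simp
  qed
qed

lemma
  fixes a b :: real
  assumes f: "f \<in> BV"
  defines "h \<equiv> \<lambda>x. f x * indicator ({0..1} - {a<..<b}) x"
  shows integrable_cut_interval: "integrable lam h"
    and norm1_cut_interval_le: "norm1 h \<le> norm1 f"
    and Var_cut_interval_le: "Var h \<le> ereal (3 * rVar f + 2 * norm1 f)"
proof -
  have int: "integrable lam f" using f by (simp add: BV_def)
  have "{0..1} - {a<..<b} \<in> sets lam" by (simp add: sets_lam_iff)
  from integrable_real_mult_indicator[OF this int]
  show ih: "integrable lam h" unfolding h_def .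
  show "norm1 h \<le> norm1 f" unfolding norm1_def h_def
    by (rule integral_mono) (use int ih in \<open>auto simp: h_def indicator_def\<close>)
  show "Var h \<le> ereal (3 * rVar f + 2 * norm1 f)"
  proof (rule ereal_le_epsilon[OF _ Var_nonneg])
    fix e :: real assume e: "0 < e"
    define r where "r = rVar f + e/3"
    have "Var f < ereal r" using e by (subst BV_Var_eq[OF f]) (simp add: r_def)
    then obtain g where g: "AE x in lam. g x = f x" and gr: "var01 g \<le> ereal r"
      unfolding Var_def by (auto simp: INF_less_iff less_imp_le)
    have K: "\<And>x. x \<in> {0..1} \<Longrightarrow> \<bar>g x\<bar> \<le> r + norm1 f"
      using abs_le_var01_plus_norm1[OF g int gr] by blast
    have "\<And>ys. sorted ys \<Longrightarrow> set ys \<subseteq> {0..1} \<Longrightarrow> variation_sum g ys \<le> r"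
      by (metis variation_sum_le_var01 gr order_trans ereal_less_eq(3))
    then have "var01 (\<lambda>x. g x * indicator ({0..1} - {a<..<b}) x) \<le> ereal (r + 2 * (r + norm1 f))"
      by (intro var01_leI ereal_less_eq(3)[THEN iffD2] variation_sum_cut_interval[OF _ _ K])
    moreover have "Var h \<le> var01 (\<lambda>x. g x * indicator ({0..1} - {a<..<b}) x)"
      unfolding Var_def by (rule INF_lower) (use g in \<open>auto simp: h_def elim!: AE_mp\<close>)
    ultimately show "Var h \<le> ereal (3 * rVar f + 2 * norm1 f + e)"
      by (auto simp: r_def algebra_simps)
  qed
qed

subsection \<open>Variation of step functions\<close>

lemma disjoint_intervals_less:
  fixes J K :: "real set"
  assumes "is_interval J" "is_interval K" "J \<inter> K = {}" "x \<in> J" "y \<in> K" "x < y" "u \<in> J" "v \<in> K"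
  shows "u < v"
proof (rule ccontr)
  assume "\<not> u < v"
  then consider "v \<le> x" | "x < v" "v \<le> u" by linarith
  then show False
  proof cases
    case 1
    then have "x \<in> K" using assms(2,5,6,8) unfolding is_interval_1 by (meson less_imp_le)
    then show False using assms(3,4) by auto
  next
    case 2
    then have "v \<in> J" using assms(1,4,7) unfolding is_interval_1 by (meson less_imp_le)
    then show False using assms(3,8) by auto
  qed
qed

text \<open>The hypothesis on \<open>lo\<close> and \<open>hi\<close> says that \<open>val J\<close> lies between \<open>g (lo J)\<close> and
  \<open>g (hi J)\<close>. The induction carries along the jump from \<open>g\<close> to \<open>val\<close> at the left end of
  the first cell.\<close>

lemma variation_sum_step_le:
  fixes \<eta> :: "real set set" and cell :: "real \<Rightarrow> real set" and lo hi val :: "real set \<Rightarrow> real"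
  assumes disj: "\<And>J K. J \<in> \<eta> \<Longrightarrow> K \<in> \<eta> \<Longrightarrow> J \<noteq> K \<Longrightarrow> J \<inter> K = {}"
    and ivl: "\<And>J. J \<in> \<eta> \<Longrightarrow> is_interval J"
    and cell: "\<And>x. x \<in> \<Union>\<eta> \<Longrightarrow> cell x \<in> \<eta> \<and> x \<in> cell x"
    and lohi: "\<And>J. J \<in> \<eta> \<Longrightarrow> lo J \<in> J \<and> hi J \<in> J \<and> lo J \<le> hi J \<and>
        \<bar>g (lo J) - val J\<bar> + \<bar>val J - g (hi J)\<bar> = \<bar>g (hi J) - g (lo J)\<bar>"
  shows "sorted xs \<Longrightarrow> set xs \<subseteq> \<Union>\<eta> \<Longrightarrow> xs \<noteq> [] \<Longrightarrow>
    \<exists>w. sorted w \<and> set w \<subseteq> \<Union>\<eta> \<and> w \<noteq> [] \<and> hd w = lo (cell (hd xs)) \<and>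
      \<bar>g (lo (cell (hd xs))) - val (cell (hd xs))\<bar> + variation_sum (\<lambda>x. val (cell x)) xs
        \<le> variation_sum g w"
proof (induction xs rule: induct_list012)
  case (2 x)
  then have "cell x \<in> \<eta>" using cell by auto
  then show ?case
    by (intro exI[of _ "[lo (cell x), hi (cell x)]"]) (use lohi[of "cell x"] in auto)
next
  case (3 x y r)
  obtain w' where w': "sorted w'" "set w' \<subseteq> \<Union>\<eta>" "w' \<noteq> []" "hd w' = lo (cell y)"
    "\<bar>g (lo (cell y)) - val (cell y)\<bar> + variation_sum (\<lambda>x. val (cell x)) (y # r) \<le> variation_sum g w'"
    using 3 by auto
  have cx: "cell x \<in> \<eta>" "x \<in> cell x" and cy: "cell y \<in> \<eta>" "y \<in> cell y"
    using cell "3.prems"(2) by auto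
  show ?case
  proof (cases "cell x = cell y")
    case True
    then show ?thesis using w' by (intro exI[of _ w']) auto
  next
    case False
    then have "x < y" using "3.prems"(1) by auto
    have lt: "hi (cell x) < lo (cell y)"
      by (rule disjoint_intervals_less[OF ivl[OF cx(1)] ivl[OF cy(1)] disj[OF cx(1) cy(1) False]
            cx(2) cy(2) \<open>x < y\<close>]) (use lohi[OF cx(1)] lohi[OF cy(1)] in auto)
    define w where "w = lo (cell x) # hi (cell x) # w'"
    have "lo (cell y) \<le> z" if "z \<in> set w'" for z
      using that w'(1,3,4) by (cases w') auto
    then have "sorted w" unfolding w_def using w'(1) lt lohi[OF cx(1)] by force
    moreover have "set w \<subseteq> \<Union>\<eta>" unfolding w_def using w' lohi[OF cx(1)] cx by auto
    moreover have "variation_sum g w = \<bar>g (hi (cell x)) - g (lo (cell x))\<bar>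
        + \<bar>g (lo (cell y)) - g (hi (cell x))\<bar> + variation_sum g w'"
      unfolding w_def using w'(3,4) by (cases w') auto
    ultimately show ?thesis
      using w'(5) lohi[OF cx(1)] by (intro exI[of _ w]) (auto simp: w_def abs_minus_commute)
  qed
qed simp

lemma ex_endpoints_between:
  fixes g :: "real \<Rightarrow> real"
  assumes "u \<in> J" "v \<in> J" "g u \<le> c" "c \<le> g v"
  shows "\<exists>lo\<in>J. \<exists>hi\<in>J. lo \<le> hi \<and> \<bar>g lo - c\<bar> + \<bar>c - g hi\<bar> = \<bar>g hi - g lo\<bar>"
proof (cases "u \<le> v")
  case True
  then show ?thesis using assms by (intro bexI[of _ u] bexI[of _ v]) auto
next
  case False
  then show ?thesis using assms by (intro bexI[of _ v] bexI[of _ u]) auto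
qed

lemma ex_le_set_average:
  assumes J: "J \<in> sets lam" "measure lam J > 0" and int: "integrable lam f"
    and g: "AE y in lam. g y = f y"
  shows "\<exists>u\<in>J. g u \<le> (LINT y:J|lam. f y) / measure lam J"
proof (rule ccontr)
  define c where "c = (LINT y:J|lam. f y) / measure lam J"
  assume "\<not> ?thesis"
  then have gt: "\<And>u. u \<in> J \<Longrightarrow> c < g u" by (auto simp: c_def not_le)
  have "integral\<^sup>L lam (\<lambda>y. indicator J y * c) < integral\<^sup>L lam (\<lambda>y. indicator J y * f y)"
  proof (rule lam.integral_less_AE[where A=J])
    show "integrable lam (\<lambda>y. indicator J y * c)"
      using J(1) by (rule integrable_indicator_mult) simp
    show "emeasure lam J \<noteq> 0" using J(2) by (simp add: lam.emeasure_eq_measure)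
    show "AE x in lam. x \<in> J \<longrightarrow> indicator J x * c \<noteq> indicator J x * f x"
      using g by (rule AE_mp) (intro AE_I2 impI, use gt in force)
    show "AE x in lam. indicator J x * c \<le> indicator J x * f x"
      using g by (rule AE_mp) (intro AE_I2 impI, use gt in \<open>force simp: indicator_def intro: less_imp_le\<close>)
  qed (use J int in \<open>auto intro!: integrable_indicator_mult\<close>)
  moreover have "integral\<^sup>L lam (\<lambda>y. indicator J y * c) = measure lam J * c"
    using sets.sets_into_space[OF J(1)] by (simp add: Int_absorb2)
  ultimately show False using J(2) by (simp add: c_def set_lebesgue_integral_def)
qed

lemma ex_ge_set_average:
  assumes J: "J \<in> sets lam" "measure lam J > 0" and int: "integrable lam f"
    and g: "AE y in lam. g y = f y"
  shows "\<exists>u\<in>J. (LINT y:J|lam. f y) / measure lam J \<le> g u"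
proof -
  have "AE y in lam. - g y = - f y"
    using g by (rule AE_mp) (rule AE_I2, simp)
  from ex_le_set_average[OF J _ this] int
  obtain u where "u \<in> J" "- g u \<le> (LINT y:J|lam. - f y) / measure lam J"
    by auto
  moreover have "(LINT y:J|lam. - f y) = - (LINT y:J|lam. f y)"
    unfolding set_lebesgue_integral_def by simp
  ultimately show ?thesis by (auto simp: minus_divide_left[symmetric])
qed

subsection \<open>Ulam's conditional expectation\<close>

context
  fixes \<eta> :: "real set set"
  assumes ip: "interval_partition \<eta>"
begin

lemma ip_finite: "finite \<eta>" and ip_Union: "\<Union>\<eta> = {0..1}"
  and ip_interval: "J \<in> \<eta> \<Longrightarrow> is_interval J" and ip_nonempty: "J \<in> \<eta> \<Longrightarrow> J \<noteq> {}"
  and ip_disjoint: "J \<in> \<eta> \<Longrightarrow> K \<in> \<eta> \<Longrightarrow> J \<noteq> K \<Longrightarrow> J \<inter> K = {}"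
  using ip unfolding interval_partition_def by auto

lemma ip_sets: "J \<in> \<eta> \<Longrightarrow> J \<in> sets lam"
  using ip_Union ip_interval real_interval_borel_measurable by (auto simp: sets_lam_iff)

definition cell :: "real \<Rightarrow> real set" where
  "cell x = (THE J. J \<in> \<eta> \<and> x \<in> J)"

lemma cell_eq: "J \<in> \<eta> \<Longrightarrow> x \<in> J \<Longrightarrow> cell x = J"
  unfolding cell_def by (rule the_equality) (use ip_disjoint in auto)

lemma cell_mem: "x \<in> {0..1} \<Longrightarrow> cell x \<in> \<eta> \<and> x \<in> cell x"
  using cell_eq ip_Union by blast

lemma Pi_part_eq:
  assumes "J \<in> \<eta>" "x \<in> J"
  shows "Pi_part \<eta> f x = (LINT y:J|lam. f y) / measure lam J"
proof -
  have "Pi_part \<eta> f x = (\<Sum>K\<in>\<eta>. if K = J then (LINT y:K|lam. f y) / measure lam K else 0)"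
    unfolding Pi_part_def using assms ip_disjoint by (intro sum.cong refl) auto
  then show ?thesis using assms ip_finite by simp
qed

lemma Pi_part_indicator:
  "Pi_part \<eta> f = (\<lambda>x. \<Sum>J\<in>\<eta>. indicator J x * ((LINT y:J|lam. f y) / measure lam J))"
  unfolding Pi_part_def by (intro ext sum.cong) (auto simp: indicator_def)

lemma integrable_Pi_part: "integrable lam (Pi_part \<eta> f)"
  unfolding Pi_part_indicator
  by (intro Bochner_Integration.integrable_sum integrable_indicator_mult ip_sets) auto

lemma AE_step_eq_Pi_part:
  assumes "\<And>J. J \<in> \<eta> \<Longrightarrow> measure lam J > 0 \<Longrightarrow> val J = (LINT y:J|lam. f y) / measure lam J"
  shows "AE x in lam. val (cell x) = Pi_part \<eta> f x"
proof (rule AE_I')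
  let ?N = "{J\<in>\<eta>. measure lam J = 0}"
  show "(\<Union>J\<in>?N. J) \<in> null_sets lam"
    using ip_finite ip_sets
    by (intro null_sets_UN') (auto simp: countable_finite null_sets_def lam.emeasure_eq_measure)
  show "{x \<in> space lam. val (cell x) \<noteq> Pi_part \<eta> f x} \<subseteq> (\<Union>J\<in>?N. J)"
  proof safe
    fix x assume x: "x \<in> space lam" "val (cell x) \<noteq> Pi_part \<eta> f x"
    have c: "cell x \<in> \<eta>" "x \<in> cell x" using cell_mem x by auto
    have "measure lam (cell x) = 0"
    proof (rule ccontr)
      assume "measure lam (cell x) \<noteq> 0"
      then have "measure lam (cell x) > 0" using measure_nonneg[of lam "cell x"] by linarith
      then show False using x assms[OF c(1)] Pi_part_eq[OF c] by simp
    qed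
    with c show "x \<in> (\<Union>J\<in>?N. J)" by blast
  qed
qed

lemma var01_step_le:
  assumes lohi: "\<And>J. J \<in> \<eta> \<Longrightarrow> lo J \<in> J \<and> hi J \<in> J \<and> lo J \<le> hi J \<and>
      \<bar>g (lo J) - val J\<bar> + \<bar>val J - g (hi J)\<bar> = \<bar>g (hi J) - g (lo J)\<bar>"
  shows "var01 (\<lambda>x. val (cell x)) \<le> var01 g"
proof (rule var01_leI)
  fix xs :: "real list" assume xs: "sorted xs" "set xs \<subseteq> {0..1}"
  show "ereal (variation_sum (\<lambda>x. val (cell x)) xs) \<le> var01 g"
  proof (cases "xs = []")
    case False
    have cell': "\<And>x. x \<in> \<Union>\<eta> \<Longrightarrow> cell x \<in> \<eta> \<and> x \<in> cell x"
      using cell_mem ip_Union by simp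
    obtain w where w: "sorted w" "set w \<subseteq> {0..1}"
      "\<bar>g (lo (cell (hd xs))) - val (cell (hd xs))\<bar> + variation_sum (\<lambda>x. val (cell x)) xs
         \<le> variation_sum g w"
      using variation_sum_step_le[OF ip_disjoint ip_interval cell' lohi xs(1) _ False] xs(2) ip_Union
      by auto
    then have "variation_sum (\<lambda>x. val (cell x)) xs \<le> variation_sum g w"
      by linarith
    then show ?thesis
      using variation_sum_le_var01[OF w(1,2), of g] by (meson ereal_less_eq(3) order_trans)
  qed (use var01_nonneg[of g] in \<open>simp add: zero_ereal_def\<close>)
qed

text \<open>On null cells it is sampled from
  the version \<open>g\<close> of \<open>f\<close>, so that it always lies between two values of \<open>g\<close> on \<open>J\<close>.\<close>

definition cell_value :: "(real \<Rightarrow> real) \<Rightarrow> (real \<Rightarrow> real) \<Rightarrow> real set \<Rightarrow> real" where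
  "cell_value f g J = (if measure lam J > 0 then (LINT y:J|lam. f y) / measure lam J
                       else g (SOME p. p \<in> J))"

lemma ex_endpoints_cell_value:
  assumes J: "J \<in> \<eta>" and int: "integrable lam f" and g: "AE x in lam. g x = f x"
  shows "\<exists>lo\<in>J. \<exists>hi\<in>J. lo \<le> hi \<and>
    \<bar>g lo - cell_value f g J\<bar> + \<bar>cell_value f g J - g hi\<bar> = \<bar>g hi - g lo\<bar>"
proof (cases "measure lam J > 0")
  case True
  then obtain u v where "u \<in> J" "v \<in> J" "g u \<le> cell_value f g J" "cell_value f g J \<le> g v"
    using ex_le_set_average[OF ip_sets[OF J] True int g]
      ex_ge_set_average[OF ip_sets[OF J] True int g] by (auto simp: cell_value_def)
  then show ?thesis by (rule ex_endpoints_between)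
next
  case False
  have "(SOME p. p \<in> J) \<in> J" using ip_nonempty[OF J] by (simp add: some_in_eq)
  then show ?thesis using False
    by (intro ex_endpoints_between[of "SOME p. p \<in> J" J "SOME p. p \<in> J"])
      (auto simp: cell_value_def)
qed

lemma Var_Pi_part_le:
  assumes int: "integrable lam f"
  shows "Var (Pi_part \<eta> f) \<le> Var f"
  unfolding Var_def[of f]
proof (rule INF_greatest)
  fix g assume "g \<in> {g. AE x in lam. g x = f x}"
  then have g: "AE x in lam. g x = f x" by simp
  obtain lo hi where lohi: "\<And>J. J \<in> \<eta> \<Longrightarrow> lo J \<in> J \<and> hi J \<in> J \<and> lo J \<le> hi J \<and>
      \<bar>g (lo J) - cell_value f g J\<bar> + \<bar>cell_value f g J - g (hi J)\<bar> = \<bar>g (hi J) - g (lo J)\<bar>"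
    using ex_endpoints_cell_value[OF _ int g] by metis
  have "AE x in lam. cell_value f g (cell x) = Pi_part \<eta> f x"
    by (rule AE_step_eq_Pi_part) (simp add: cell_value_def)
  then have "Var (Pi_part \<eta> f) \<le> var01 (\<lambda>x. cell_value f g (cell x))"
    unfolding Var_def by (intro INF_lower) simp
  also have "\<dots> \<le> var01 g"
    using lohi by (rule var01_step_le)
  finally show "Var (Pi_part \<eta> f) \<le> var01 g" .
qed

lemma sum_indicator_cells: "x \<in> {0..1} \<Longrightarrow> (\<Sum>J\<in>\<eta>. indicator J x) = (1::real)"
  using ip_finite cell_mem[of x] cell_eq
  by (subst sum.remove[of _ "cell x"]) (auto intro!: sum.neutral simp: indicator_def)

lemma norm1_Pi_part_le:
  assumes int: "integrable lam f"
  shows "norm1 (Pi_part \<eta> f) \<le> norm1 f"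
proof -
  define c where "c J = (LINT y:J|lam. f y) / measure lam J" for J
  have "norm1 (Pi_part \<eta> f) \<le> integral\<^sup>L lam (\<lambda>x. \<Sum>J\<in>\<eta>. indicator J x * \<bar>c J\<bar>)"
    unfolding norm1_def
  proof (rule integral_mono)
    fix x
    have "\<bar>Pi_part \<eta> f x\<bar> \<le> (\<Sum>J\<in>\<eta>. \<bar>indicator J x * c J\<bar>)"
      unfolding Pi_part_indicator c_def by (rule sum_abs)
    then show "\<bar>Pi_part \<eta> f x\<bar> \<le> (\<Sum>J\<in>\<eta>. indicator J x * \<bar>c J\<bar>)" by (simp add: abs_mult)
  qed (use integrable_Pi_part ip_sets in \<open>auto intro!: Bochner_Integration.integrable_sum\<close>)
  also have "\<dots> = (\<Sum>J\<in>\<eta>. measure lam J * \<bar>c J\<bar>)"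
  proof -
    have "integrable lam (indicat_real J)" if "J \<in> \<eta>" for J
      using ip_sets[OF that] by (rule integrable_real_indicator) (simp add: less_top[symmetric] lam.emeasure_finite)
    moreover have "J \<inter> {0..1} = J" if "J \<in> \<eta>" for J
      using that ip_Union by blast
    ultimately show ?thesis
      using ip_sets by (subst Bochner_Integration.integral_sum) (auto intro!: integrable_indicator_mult)
  qed
  also have "\<dots> \<le> (\<Sum>J\<in>\<eta>. integral\<^sup>L lam (\<lambda>x. indicator J x * \<bar>f x\<bar>))"
  proof (rule sum_mono)
    fix J assume J: "J \<in> \<eta>"
    have "measure lam J * \<bar>c J\<bar> \<le> \<bar>integral\<^sup>L lam (\<lambda>x. indicator J x * f x)\<bar>"
      using measure_nonneg[of lam J]
      by (cases "measure lam J = 0") (simp_all add: c_def abs_div set_lebesgue_integral_def)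
    also have "\<dots> \<le> integral\<^sup>L lam (\<lambda>x. indicator J x * \<bar>f x\<bar>)"
      by (rule integral_abs_bound_integral) (use int ip_sets[OF J] in \<open>auto simp: abs_mult\<close>)
    finally show "measure lam J * \<bar>c J\<bar> \<le> integral\<^sup>L lam (\<lambda>x. indicator J x * \<bar>f x\<bar>)" .
  qed
  also have "\<dots> = integral\<^sup>L lam (\<lambda>x. (\<Sum>J\<in>\<eta>. indicator J x) * \<bar>f x\<bar>)"
    unfolding sum_distrib_right using ip_sets int by (subst Bochner_Integration.integral_sum) auto
  also have "\<dots> = norm1 f"
    unfolding norm1_def by (rule Bochner_Integration.integral_cong) (simp_all add: sum_indicator_cells)
  finally show ?thesis .
qed

end

subsection \<open>Lasota--Yorke steps and their iterates\<close>

definition LY_step :: "((real \<Rightarrow> real) \<Rightarrow> (real \<Rightarrow> real)) \<Rightarrow> real \<Rightarrow> real \<Rightarrow> bool" where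
  "LY_step Q \<alpha> C \<longleftrightarrow> (\<forall>f\<in>BV. Q f \<in> BV \<and> rVar (Q f) \<le> \<alpha> * rVar f + C * norm1 f
                                 \<and> norm1 (Q f) \<le> norm1 f)"

lemma LY_stepI:
  assumes "\<And>f. f \<in> BV \<Longrightarrow> integrable lam (Q f)"
    and "\<And>f. f \<in> BV \<Longrightarrow> Var (Q f) \<le> ereal (\<alpha> * rVar f + C * norm1 f)"
    and "\<And>f. f \<in> BV \<Longrightarrow> norm1 (Q f) \<le> norm1 f"
  shows "LY_step Q \<alpha> C"
  unfolding LY_step_def using assms by (blast intro: BVI BV_rVar_le)

lemma LY_step_comp:
  assumes Q: "LY_step Q \<alpha> C" and R: "LY_step R \<beta> D" and "0 \<le> \<beta>" "0 \<le> D"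
  shows "LY_step (R \<circ> Q) (\<beta> * \<alpha>) (\<beta> * C + D)"
  unfolding LY_step_def
proof
  fix f assume f: "f \<in> BV"
  have Qf: "Q f \<in> BV" "rVar (Q f) \<le> \<alpha> * rVar f + C * norm1 f" "norm1 (Q f) \<le> norm1 f"
    using Q f by (auto simp: LY_step_def)
  have RQf: "R (Q f) \<in> BV" "rVar (R (Q f)) \<le> \<beta> * rVar (Q f) + D * norm1 (Q f)"
      "norm1 (R (Q f)) \<le> norm1 (Q f)"
    using R Qf(1) by (auto simp: LY_step_def)
  have "\<beta> * rVar (Q f) + D * norm1 (Q f) \<le> \<beta> * (\<alpha> * rVar f + C * norm1 f) + D * norm1 f"
    using Qf assms(3,4) by (intro add_mono mult_left_mono) auto
  then show "(R \<circ> Q) f \<in> BV \<and> rVar ((R \<circ> Q) f) \<le> \<beta> * \<alpha> * rVar f + (\<beta> * C + D) * norm1 f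
      \<and> norm1 ((R \<circ> Q) f) \<le> norm1 f"
    using RQf Qf(3) by (simp add: algebra_simps)
qed

lemma LY_step_funpow:
  assumes Q: "LY_step Q \<alpha> C" and "0 \<le> \<alpha>" "0 \<le> C"
  shows "LY_step (Q ^^ n) (\<alpha> ^ n) (C * (\<Sum>i<n. \<alpha> ^ i))"
proof (induction n)
  case 0
  show ?case by (simp add: LY_step_def)
next
  case (Suc n)
  have "\<alpha> * (C * (\<Sum>i<n. \<alpha> ^ i)) + C = C * (\<Sum>i<Suc n. \<alpha> ^ i)"
    by (simp add: sum.lessThan_Suc_shift sum_distrib_left algebra_simps del: sum.lessThan_Suc)
  with LY_step_comp[OF Suc.IH Q assms(2,3)] show ?case
    by (simp add: comp_def)
qed

lemma normBV_funpow_le: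
  assumes Q: "LY_step Q \<alpha> C" and \<alpha>: "0 \<le> \<alpha>" "\<alpha> < 1" and C: "0 \<le> C" and f: "f \<in> BV"
  shows "normBV ((Q ^^ n) f) \<le> ereal (\<alpha> ^ n) * normBV f + ereal ((1 + C / (1 - \<alpha>)) * norm1 f)"
proof -
  let ?g = "(Q ^^ n) f"
  have g: "?g \<in> BV" "rVar ?g \<le> \<alpha> ^ n * rVar f + C * (\<Sum>i<n. \<alpha> ^ i) * norm1 f"
      "norm1 ?g \<le> norm1 f"
    using LY_step_funpow[OF Q \<alpha>(1) C] f by (auto simp: LY_step_def)
  have "(\<Sum>i<n. \<alpha> ^ i) \<le> 1 / (1 - \<alpha>)"
    using \<alpha> by (simp add: sum_gp_strict divide_right_mono)
  then have "C * (\<Sum>i<n. \<alpha> ^ i) * norm1 f \<le> C * (1 / (1 - \<alpha>)) * norm1 f"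
    using C norm1_nonneg[of f] by (intro mult_left_mono mult_right_mono)
  moreover have "0 \<le> \<alpha> ^ n * norm1 f"
    using \<alpha> norm1_nonneg[of f] by simp
  ultimately have "rVar ?g + norm1 ?g \<le> \<alpha> ^ n * (rVar f + norm1 f) + (1 + C / (1 - \<alpha>)) * norm1 f"
    using g(2,3) by (simp add: algebra_simps)
  then show ?thesis
    using BV_normBV_eq[OF g(1)] BV_normBV_eq[OF f] by simp
qed

lemma LY_step_PF:
  assumes meas: "T \<in> lam \<rightarrow>\<^sub>M lam" and PF: "is_PF_operator T P"
    and LY: "\<And>f. f \<in> BV \<Longrightarrow> Var (P f) \<le> ereal \<alpha> * Var f + ereal (B * norm1 f)"
  shows "LY_step P \<alpha> B"
proof (rule LY_stepI)
  fix f assume f: "f \<in> BV"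
  then have int: "integrable lam f" by (simp add: BV_def)
  show "integrable lam (P f)" using PF int by (rule PF_integrable)
  show "norm1 (P f) \<le> norm1 f" using meas PF int by (rule norm1_PF_le)
  show "Var (P f) \<le> ereal (\<alpha> * rVar f + B * norm1 f)"
    using LY[OF f] by (subst (asm) BV_Var_eq[OF f]) simp
qed

lemma LY_step_Pi_part: "interval_partition \<eta> \<Longrightarrow> LY_step (Pi_part \<eta>) 1 0"
  by (rule LY_stepI)
    (auto simp: BV_def integrable_Pi_part norm1_Pi_part_le Var_Pi_part_le BV_Var_eq[symmetric])

lemma LY_step_cut_interval: "LY_step (\<lambda>f x. f x * indicator ({0..1} - {a<..<b}) x) 3 2"
  by (rule LY_stepI) (auto intro: integrable_cut_interval norm1_cut_interval_le Var_cut_interval_le)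

theorem lemma4p1:
  fixes T :: "real \<Rightarrow> real"
    and P :: "(real \<Rightarrow> real) \<Rightarrow> (real \<Rightarrow> real)"
    and \<alpha>0 B0 :: real
  assumes meas: "T \<in> lam \<rightarrow>\<^sub>M lam"
    and nonsing: "nonsingular T"
    and PF: "is_PF_operator T P"
    and \<alpha>0: "0 < \<alpha>0" "\<alpha>0 < 1"
    and B0: "0 \<le> B0"
    and LY: "\<And>f. f \<in> BV \<Longrightarrow> Var (P f) \<le> ereal \<alpha>0 * Var f + ereal (B0 * norm1 f)"
  shows "(\<forall>n f. f \<in> BV \<longrightarrow>
            normBV ((P ^^ n) f) \<le> ereal (\<alpha>0 ^ n) * normBV f + ereal ((1 + B0 / (1 - \<alpha>0)) * norm1 f))
       \<and> (\<forall>\<eta> n f. interval_partition \<eta> \<longrightarrow> f \<in> BV \<longrightarrow>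
            normBV ((ulam_op \<eta> P ^^ n) f) \<le> ereal (\<alpha>0 ^ n) * normBV f + ereal ((1 + B0 / (1 - \<alpha>0)) * norm1 f))
       \<and> (\<alpha>0 < 1/3 \<longrightarrow>
          (\<forall>a b n f. 0 \<le> a \<longrightarrow> a < b \<longrightarrow> b \<le> 1 \<longrightarrow> f \<in> BV \<longrightarrow>
            normBV ((hole_op {a<..<b} P ^^ n) f)
              \<le> ereal ((3 * \<alpha>0) ^ n) * normBV f
                 + ereal ((1 + (2 * \<alpha>0 + B0) / (1 - 3 * \<alpha>0)) * norm1 f)))"
proof -
  have P: "LY_step P \<alpha>0 B0"
    using meas PF LY by (rule LY_step_PF)
  have ulam: "LY_step (ulam_op \<eta> P) \<alpha>0 B0" if "interval_partition \<eta>" for \<eta>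
  proof -
    have "LY_step (Pi_part \<eta> \<circ> P) \<alpha>0 B0"
      using LY_step_comp[OF P LY_step_Pi_part[OF that]] by simp
    from LY_step_comp[OF LY_step_Pi_part[OF that] this] show ?thesis
      using \<alpha>0 B0 by (simp add: ulam_op_def)
  qed
  have hole: "LY_step (hole_op {a<..<b} P) (3 * \<alpha>0) (2 * \<alpha>0 + B0)" for a b :: real
    using LY_step_comp[OF LY_step_cut_interval[of a b] P] \<alpha>0 B0
    by (simp add: hole_op_def[abs_def] comp_def mult.commute)
  show ?thesis
    using normBV_funpow_le[OF P] normBV_funpow_le[OF ulam] normBV_funpow_le[OF hole] \<alpha>0 B0
    by simp
qed

end
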